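(* Let $A\in\mathbb S_+$, $f\in[0,\infty)$, and let $\lambda$ be the smallest eigenvalue of $A$. Then the function $\Phi_{A,f}:[-f,\infty)\to[-\lambda,\infty)$, $\delta\mapsto H(A,f+\delta)$, is well defined, continuous, strictly monotonically increasing and bijective.
   Context: $\mathbb S$ denotes the set of real symmetric $d\times d$ matrices ($d\ge2$), $\mathbb S_+=\{A\in\mathbb S: A\ge 0\}$, $\mathbb S_1=\{B\in\mathbb S_+:\operatorname{tr}B=1\}$, and $A:B=\operatorname{tr}(A^TB)$. For $A\in\mathbb S$ and $f\in[0,\infty)$, $H(A,f)=\sup_{B\in\mathbb S_1}\bigl(-B:A+f\sqrt[d]{\det B}\bigr)$. *)

theory Defs
  imports "HOL-Analysis.Analysis"
begin

definition sym_mat :: "real^'n^'n \<Rightarrow> bool" where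
  "sym_mat A \<longleftrightarrow> transpose A = A"

definition psd :: "real^'n^'n \<Rightarrow> bool" where
  "psd A \<longleftrightarrow> sym_mat A \<and> (\<forall>x. 0 \<le> x \<bullet> (A *v x))"

definition S1 :: "(real^'n^'n) set" where
  "S1 = {B. psd B \<and> trace B = 1}"

definition frob :: "real^'n^'n \<Rightarrow> real^'n^'n \<Rightarrow> real" where
  "frob A B = trace (transpose A ** B)"

definition Hset :: "real^'n^'n \<Rightarrow> real \<Rightarrow> real set" where
  "Hset A f = (\<lambda>B. - frob B A + f * root CARD('n) (det B)) ` (S1 :: (real^'n^'n) set)"

definition H :: "real^'n^'n \<Rightarrow> real \<Rightarrow> real" where
  "H A f = Sup (Hset A f)"

definition eigenvalues :: "real^'n^'n \<Rightarrow> real set" where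
  "eigenvalues A = {l. \<exists>v. v \<noteq> 0 \<and> A *v v = l *\<^sub>R v}"

definition min_eig :: "real^'n^'n \<Rightarrow> real" where
  "min_eig A = Min (eigenvalues A)"

end

theory Submission
  imports Defs
begin

(*
  H(A, .) is a supremum over S_1 of the affine functions g \<mapsto> - B:A + g (det B)^(1/d), whose
  intercepts are at most -\<lambda> and whose slopes lie in [0, 1] (the eigenvalues of B lie in [0, 1]);
  hence it is finite, 1-Lipschitz and convex. Conjugation by an orthogonal matrix preserves S_1,
  B:A and det B, so A may be taken diagonal. Then H(A, 0) = -\<lambda>, attained at the projection onto
  a \<lambda>-eigenvector, and H(A, g) > -\<lambda> for g > 0: moving a small mass t from that eigenvector to
  the others costs t (tr A - d \<lambda>) but gains g (det B)^(1/d), which is of order t^((d-1)/d).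
  Convexity turns this into strict monotonicity, and H(A, g) \<ge> (g - tr A)/d, obtained at B = I/d,
  gives surjectivity onto [-\<lambda>, \<infinity>) by the intermediate value theorem.
*)

section \<open>Spectral theorem for real symmetric matrices\<close>

lemma sym_mat_inner_mult:
  fixes A :: "real^'n^'n"
  assumes "sym_mat A"
  shows "x \<bullet> (A *v y) = (A *v x) \<bullet> y"
  using assms unfolding sym_mat_def by (metis dot_lmul_matrix vector_transpose_matrix)

lemma quadratic_nonneg_imp_linear_coeff_zero:
  fixes a b :: real
  assumes "\<And>t. 0 \<le> 2 * t * b + t\<^sup>2 * a"
  shows "b = 0"
proof -
  define r where "r = 1 / (\<bar>a\<bar> + 1)"
  have r: "r > 0" "a * r < 2"
    unfolding r_def by (auto simp: field_simps)
  have "0 \<le> 2 * (- b * r) * b + (- b * r)\<^sup>2 * a" by (rule assms)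
  also have "\<dots> = b\<^sup>2 * r * (a * r - 2)" by (simp add: power2_eq_square algebra_simps)
  finally have "0 \<le> b\<^sup>2 * r * (a * r - 2)" .
  moreover have "b\<^sup>2 * r * (a * r - 2) \<le> 0"
    using r by (intro mult_nonneg_nonpos) auto
  ultimately show ?thesis using r by (simp add: mult_le_0_iff)
qed

text \<open>Along u + t w with w = A u - (u \<bullet> A u) u, minimality gives a quadratic inequality in t
  whose linear coefficient is w \<bullet> w; hence w = 0.\<close>
lemma rayleigh_minimizer_is_eigenvector:
  fixes A :: "real^'n^'n"
  assumes sym: "sym_mat A" and V: "subspace V" and inv: "\<And>y. y \<in> V \<Longrightarrow> A *v y \<in> V"
    and u: "u \<in> V" "norm u = 1"
    and min: "\<And>y. y \<in> V \<Longrightarrow> norm y = 1 \<Longrightarrow> u \<bullet> (A *v u) \<le> y \<bullet> (A *v y)"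
  shows "A *v u = (u \<bullet> (A *v u)) *\<^sub>R u"
proof -
  define l where "l = u \<bullet> (A *v u)"
  have ray: "l * (y \<bullet> y) \<le> y \<bullet> (A *v y)" if "y \<in> V" for y
  proof (cases "y = 0")
    case False
    define z where "z = (1 / norm y) *\<^sub>R y"
    have "l \<le> z \<bullet> (A *v z)"
      unfolding l_def z_def using False that V by (intro min) (auto simp: subspace_scale)
    also have "\<dots> = (y \<bullet> (A *v y)) / (norm y)\<^sup>2"
      unfolding z_def by (simp add: matrix_vector_mult_scaleR power2_eq_square)
    finally show ?thesis using False by (simp add: field_simps power2_norm_eq_inner)
  qed simp
  define w where "w = A *v u - l *\<^sub>R u"
  have w: "w \<in> V" unfolding w_def using u V inv by (simp add: subspace_diff subspace_scale)
  have uu: "u \<bullet> u = 1" using u by (simp add: norm_eq_1)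
  have wu: "w \<bullet> u = 0"
    unfolding w_def l_def using uu by (simp add: inner_diff_left inner_diff_right inner_commute)
  have wAu: "w \<bullet> (A *v u) = w \<bullet> w" unfolding w_def
    by (simp add: inner_diff_right wu[unfolded w_def])
  have "0 \<le> 2 * t * (w \<bullet> w) + t\<^sup>2 * (w \<bullet> (A *v w) - l * (w \<bullet> w))" for t
  proof -
    have "u + t *\<^sub>R w \<in> V" using u w V by (simp add: subspace_add subspace_scale)
    from ray[OF this] show ?thesis
      using sym_mat_inner_mult[OF sym, of u w] wAu wu uu
      by (simp add: l_def matrix_vector_right_distrib matrix_vector_mult_scaleR inner_add_left
          inner_add_right inner_commute power2_eq_square algebra_simps)
  qed
  then have "w \<bullet> w = 0" by (rule quadratic_nonneg_imp_linear_coeff_zero)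
  then show ?thesis unfolding w_def l_def by simp
qed

lemma sym_mat_eigenvector_orthogonal:
  fixes A :: "real^'n^'n"
  assumes sym: "sym_mat A" and S: "finite S" "card S < CARD('n)"
    and eig: "\<And>s. s \<in> S \<Longrightarrow> \<exists>\<mu>. A *v s = \<mu> *\<^sub>R s"
  shows "\<exists>u \<mu>. norm u = 1 \<and> A *v u = \<mu> *\<^sub>R u \<and> (\<forall>s\<in>S. orthogonal s u)"
proof -
  define V where "V = {y. \<forall>s\<in>S. orthogonal s y}"
  have V: "subspace V" unfolding V_def by (rule subspace_orthogonal_to_vectors)
  have inv: "A *v y \<in> V" if "y \<in> V" for y
  proof -
    have "orthogonal s (A *v y)" if "s \<in> S" for s
    proof -
      obtain \<mu> where "A *v s = \<mu> *\<^sub>R s" using eig \<open>s \<in> S\<close> by blast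
      then show ?thesis using \<open>y \<in> V\<close> \<open>s \<in> S\<close> sym_mat_inner_mult[OF sym, of s y]
        unfolding V_def orthogonal_def by simp
    qed
    then show ?thesis unfolding V_def by blast
  qed
  have "dim S < DIM(real^'n)"
    using dim_le_card[OF _ S(1), of S] S(2) by (simp add: span_base subset_iff)
  then obtain x where x: "x \<noteq> 0" "\<And>y. y \<in> span S \<Longrightarrow> orthogonal x y"
    using orthogonal_to_subspace_exists by blast
  have "x \<in> V" unfolding V_def using x(2) by (simp add: span_base orthogonal_commute)
  define K where "K = V \<inter> sphere 0 1"
  have "compact K" unfolding K_def using V by (intro closed_Int_compact closed_subspace) auto
  moreover have "(1 / norm x) *\<^sub>R x \<in> K"
    unfolding K_def using x(1) \<open>x \<in> V\<close> V by (simp add: subspace_scale)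
  moreover have "continuous_on K (\<lambda>y. y \<bullet> (A *v y))" by (intro continuous_intros)
  ultimately have "\<exists>u\<in>K. \<forall>y\<in>K. u \<bullet> (A *v u) \<le> y \<bullet> (A *v y)"
    by (intro continuous_attains_inf) auto
  then obtain u where u: "u \<in> K" and umin: "\<And>y. y \<in> K \<Longrightarrow> u \<bullet> (A *v u) \<le> y \<bullet> (A *v y)"
    by blast
  have "A *v u = (u \<bullet> (A *v u)) *\<^sub>R u"
    using u umin unfolding K_def by (intro rayleigh_minimizer_is_eigenvector[OF sym V inv]) auto
  then show ?thesis using u unfolding K_def V_def by auto
qed

lemma sym_mat_orthonormal_eigenvectors:
  fixes A :: "real^'n^'n"
  assumes "sym_mat A" "k \<le> CARD('n)"
  shows "\<exists>S. finite S \<and> card S = k \<and> (\<forall>s\<in>S. norm s = 1 \<and> (\<exists>\<mu>. A *v s = \<mu> *\<^sub>R s))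
           \<and> pairwise orthogonal S"
  using assms(2)
proof (induction k)
  case 0
  show ?case by (intro exI[of _ "{}"]) auto
next
  case (Suc k)
  then obtain S where S: "finite S" "card S = k"
    "\<forall>s\<in>S. norm s = 1 \<and> (\<exists>\<mu>. A *v s = \<mu> *\<^sub>R s)" "pairwise orthogonal S"
    by auto
  obtain u \<mu> where u: "norm u = 1" "A *v u = \<mu> *\<^sub>R u" "\<forall>s\<in>S. orthogonal s u"
    using sym_mat_eigenvector_orthogonal[OF assms(1) S(1)] S(2,3) Suc.prems by fastforce
  then have "u \<notin> S" by (metis orthogonal_self norm_zero zero_neq_one)
  moreover have "pairwise orthogonal (insert u S)"
    using S(4) u(3) orthogonal_commute by (auto simp: pairwise_insert)
  ultimately show ?case
    using S u by (intro exI[of _ "insert u S"]) (simp add: card_insert_disjoint; blast)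
qed

definition diagm :: "('n \<Rightarrow> real) \<Rightarrow> real^'n^'n" where
  "diagm d = (\<chi> i j. if i = j then d i else 0)"

lemma transpose_mult_mult_entry:
  fixes P M Q :: "real^'n^'n"
  shows "(transpose P ** M ** Q) $ i $ j = column i P \<bullet> (M *v column j Q)"
proof -
  have "(transpose P ** M ** Q) $ i $ j = (\<Sum>k\<in>UNIV. \<Sum>l\<in>UNIV. P$l$i * M$l$k * Q$k$j)"
    by (simp add: matrix_matrix_mult_def transpose_def sum_distrib_right)
  also have "\<dots> = (\<Sum>l\<in>UNIV. \<Sum>k\<in>UNIV. P$l$i * M$l$k * Q$k$j)" by (rule sum.swap)
  also have "\<dots> = column i P \<bullet> (M *v column j Q)"
    by (simp add: matrix_vector_mult_def inner_vec_def column_def sum_distrib_left mult.assoc)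
  finally show ?thesis .
qed

theorem sym_mat_diagonalization:
  fixes A :: "real^'n^'n"
  assumes "sym_mat A"
  obtains Q d where "orthogonal_matrix Q" "transpose Q ** A ** Q = diagm d"
proof -
  obtain S where S: "finite S" "card S = CARD('n)"
    "\<forall>s\<in>S. norm s = 1 \<and> (\<exists>\<mu>. A *v s = \<mu> *\<^sub>R s)" "pairwise orthogonal S"
    using sym_mat_orthonormal_eigenvectors[OF assms order_refl] by blast
  obtain h where h: "bij_betw h (UNIV :: 'n set) S"
    using finite_same_card_bij[of "UNIV :: 'n set" S] S(1,2) by auto
  have hS: "h i \<in> S" for i using h by (auto simp: bij_betw_def)
  have "\<forall>i. \<exists>\<mu>. A *v h i = \<mu> *\<^sub>R h i" using S(3) hS by blast
  then obtain d where hd: "\<And>i. A *v h i = d i *\<^sub>R h i" by metis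
  have horth: "h i \<bullet> h j = (if i = j then 1 else 0)" for i j
  proof (cases "i = j")
    case False
    then have "h i \<noteq> h j" using bij_betw_imp_inj_on[OF h] by (auto simp: inj_on_def)
    then show ?thesis using S(4) hS False by (simp add: pairwise_def orthogonal_def)
  qed (use S(3) hS in \<open>simp add: norm_eq_1\<close>)
  define Q :: "real^'n^'n" where "Q = (\<chi> r c. h c $ r)"
  have col: "column c Q = h c" for c unfolding Q_def column_def by (simp add: vec_eq_iff)
  have "orthogonal_matrix Q"
    unfolding orthogonal_matrix_orthonormal_columns col using horth
    by (auto simp: norm_eq_1 orthogonal_def)
  moreover have "transpose Q ** A ** Q = diagm d"
    using horth by (simp add: vec_eq_iff transpose_mult_mult_entry col hd diagm_def)
  ultimately show thesis by (rule that)
qed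

section \<open>Orthogonal conjugation\<close>

lemma psd_diag_nonneg:
  fixes B :: "real^'n^'n"
  assumes "psd B"
  shows "0 \<le> B $ i $ i"
proof -
  have "0 \<le> axis i 1 \<bullet> (B *v axis i 1)" using assms by (simp add: psd_def)
  then show ?thesis by (simp add: matrix_vector_mult_basis inner_axis' column_def)
qed

lemma psd_transpose_mult_mult:
  fixes B Q :: "real^'n^'n"
  assumes "psd B"
  shows "psd (transpose Q ** B ** Q)"
proof -
  have "x \<bullet> ((transpose Q ** B ** Q) *v x) = x \<bullet> (transpose Q *v (B *v (Q *v x)))" for x
    by (simp add: matrix_vector_mul_assoc matrix_mul_assoc del: transpose_matrix_vector)
  also have "\<dots> x = (Q *v x) \<bullet> (B *v (Q *v x))" for x
    by (metis dot_lmul_matrix inner_commute transpose_matrix_vector)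
  finally have "x \<bullet> ((transpose Q ** B ** Q) *v x) = (Q *v x) \<bullet> (B *v (Q *v x))" for x .
  with assms show ?thesis
    by (simp add: psd_def sym_mat_def matrix_transpose_mul matrix_mul_assoc)
qed

lemma orthogonal_conj_inverse:
  fixes B Q :: "real^'n^'n"
  assumes "orthogonal_matrix Q"
  shows "Q ** (transpose Q ** B ** Q) ** transpose Q = B"
proof -
  have "Q ** (transpose Q ** B ** Q) ** transpose Q
      = (Q ** transpose Q) ** B ** (Q ** transpose Q)"
    by (simp only: matrix_mul_assoc)
  with assms show ?thesis by (simp add: orthogonal_matrix_def)
qed

lemma trace_orthogonal_conj:
  fixes B Q :: "real^'n^'n"
  assumes "orthogonal_matrix Q"
  shows "trace (transpose Q ** B ** Q) = trace B"
proof -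
  have "trace (transpose Q ** B ** Q) = trace (transpose Q ** (B ** Q))"
    by (simp only: matrix_mul_assoc)
  also have "\<dots> = trace (B ** Q ** transpose Q)" by (rule trace_mul_sym)
  also have "\<dots> = trace (B ** (Q ** transpose Q))" by (simp only: matrix_mul_assoc)
  finally show ?thesis using assms by (simp add: orthogonal_matrix_def)
qed

lemma det_orthogonal_conj:
  fixes B Q :: "real^'n^'n"
  assumes "orthogonal_matrix Q"
  shows "det (transpose Q ** B ** Q) = det B"
proof -
  have "det Q * det Q = 1" using det_orthogonal_matrix[OF assms] by auto
  then show ?thesis by (simp add: det_mul det_transpose)
qed

lemma frob_orthogonal_conj:
  fixes A B Q :: "real^'n^'n"
  assumes "orthogonal_matrix Q"
  shows "frob (transpose Q ** B ** Q) (transpose Q ** A ** Q) = frob B A"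
proof -
  have "transpose (transpose Q ** B ** Q) ** (transpose Q ** A ** Q)
      = transpose Q ** transpose B ** (Q ** transpose Q) ** A ** Q"
    by (simp only: matrix_transpose_mul transpose_transpose matrix_mul_assoc)
  also have "\<dots> = transpose Q ** (transpose B ** A) ** Q"
    using assms by (simp add: orthogonal_matrix_def matrix_mul_assoc)
  finally show ?thesis unfolding frob_def by (simp add: trace_orthogonal_conj[OF assms])
qed

lemma S1_orthogonal_conj:
  fixes B Q :: "real^'n^'n"
  assumes "orthogonal_matrix Q" "B \<in> S1"
  shows "transpose Q ** B ** Q \<in> S1"
  using assms by (auto simp: S1_def psd_transpose_mult_mult trace_orthogonal_conj)

lemma image_S1_orthogonal_conj:
  fixes Q :: "real^'n^'n"
  assumes "orthogonal_matrix Q"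
  shows "(\<lambda>B. transpose Q ** B ** Q) ` S1 = S1"
proof
  show "S1 \<subseteq> (\<lambda>B. transpose Q ** B ** Q) ` S1"
  proof
    fix B :: "real^'n^'n" assume "B \<in> S1"
    then have "transpose (transpose Q) ** B ** transpose Q \<in> S1"
      using assms by (intro S1_orthogonal_conj) auto
    moreover have "B = transpose Q ** (Q ** B ** transpose Q) ** Q"
      using orthogonal_conj_inverse[of "transpose Q" B] assms by simp
    ultimately show "B \<in> (\<lambda>B. transpose Q ** B ** Q) ` S1" by auto
  qed
qed (use S1_orthogonal_conj[OF assms] in auto)

lemma Hset_orthogonal_conj:
  fixes A Q :: "real^'n^'n"
  assumes "orthogonal_matrix Q"
  shows "Hset (transpose Q ** A ** Q) = Hset A"
proof
  fix g
  have "Hset (transpose Q ** A ** Q) g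
      = (\<lambda>B. - frob B (transpose Q ** A ** Q) + g * root CARD('n) (det B))
          ` (\<lambda>B. transpose Q ** B ** Q) ` S1"
    unfolding Hset_def image_S1_orthogonal_conj[OF assms] ..
  also have "\<dots> = Hset A g"
    unfolding Hset_def image_image frob_orthogonal_conj[OF assms] det_orthogonal_conj[OF assms] ..
  finally show "Hset (transpose Q ** A ** Q) g = Hset A g" .
qed

lemma eigenvalues_subset_orthogonal_conj:
  fixes A Q :: "real^'n^'n"
  assumes "orthogonal_matrix Q"
  shows "eigenvalues A \<subseteq> eigenvalues (transpose Q ** A ** Q)"
proof
  fix \<mu> assume "\<mu> \<in> eigenvalues A"
  then obtain v where v: "v \<noteq> 0" "A *v v = \<mu> *\<^sub>R v" unfolding eigenvalues_def by blast
  have QQ: "Q ** transpose Q = mat 1" using assms by (simp add: orthogonal_matrix_def)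
  have Qv: "Q *v (transpose Q *v v) = v"
    by (simp add: matrix_vector_mul_assoc QQ del: transpose_matrix_vector)
  then have "transpose Q *v v \<noteq> 0" using v(1) by auto
  moreover have "(transpose Q ** A ** Q) *v (transpose Q *v v) = \<mu> *\<^sub>R (transpose Q *v v)"
    using v(2) by (simp add: matrix_vector_mul_assoc[symmetric] Qv matrix_vector_mult_scaleR
        del: transpose_matrix_vector)
  ultimately show "\<mu> \<in> eigenvalues (transpose Q ** A ** Q)" unfolding eigenvalues_def by blast
qed

lemma eigenvalues_orthogonal_conj:
  fixes A Q :: "real^'n^'n"
  assumes "orthogonal_matrix Q"
  shows "eigenvalues (transpose Q ** A ** Q) = eigenvalues A"
  using eigenvalues_subset_orthogonal_conj[OF assms, of A]
    eigenvalues_subset_orthogonal_conj[of "transpose Q" "transpose Q ** A ** Q"]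
  by (simp add: assms orthogonal_conj_inverse)

section \<open>Diagonal matrices\<close>

lemma diagm_mult_vec: "diagm d *v x = (\<chi> i. d i * x $ i)"
proof -
  have "(\<Sum>j\<in>UNIV. (if i = j then d i else 0) * x $ j) = d i * x $ i" for i
    by (simp add: if_distrib[of "\<lambda>a. a * _"] cong: if_cong)
  then show ?thesis by (simp add: vec_eq_iff matrix_vector_mult_def diagm_def)
qed

lemma det_diagm: "det (diagm d) = prod d UNIV"
  by (subst det_diagonal) (auto simp: diagm_def)

lemma trace_diagm: "trace (diagm d) = sum d UNIV"
  by (simp add: trace_def diagm_def)

lemma eigenvalues_diagm: "eigenvalues (diagm d) = range d"
proof
  show "range d \<subseteq> eigenvalues (diagm d)"
  proof
    fix \<mu> assume "\<mu> \<in> range d"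
    then obtain i where "\<mu> = d i" by blast
    then have "diagm d *v axis i 1 = \<mu> *\<^sub>R axis i 1"
      by (simp add: diagm_mult_vec vec_eq_iff axis_def)
    moreover have "axis i (1::real) \<noteq> 0" by (simp add: axis_eq_0_iff)
    ultimately show "\<mu> \<in> eigenvalues (diagm d)" unfolding eigenvalues_def by blast
  qed
  show "eigenvalues (diagm d) \<subseteq> range d"
  proof
    fix \<mu> assume "\<mu> \<in> eigenvalues (diagm d)"
    then obtain v where v: "v \<noteq> 0" "diagm d *v v = \<mu> *\<^sub>R v" unfolding eigenvalues_def by blast
    then obtain i where "v $ i \<noteq> 0" by (metis vec_eq_iff zero_index)
    moreover have "(diagm d *v v) $ i = (\<mu> *\<^sub>R v) $ i" using v(2) by (rule arg_cong)
    then have "d i * v $ i = \<mu> * v $ i" by (simp add: diagm_mult_vec)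
    ultimately have "\<mu> = d i" by simp
    then show "\<mu> \<in> range d" by simp
  qed
qed

lemma frob_diagm: "frob B (diagm d) = (\<Sum>i\<in>UNIV. B $ i $ i * d i)"
  by (simp add: frob_def trace_def matrix_matrix_mult_def diagm_def transpose_def if_distrib
      cong: if_cong)

lemma diagm_in_S1:
  assumes "\<And>i. 0 \<le> b i" "sum b UNIV = 1"
  shows "diagm b \<in> S1"
proof -
  have "x \<bullet> (diagm b *v x) = (\<Sum>i\<in>UNIV. b i * (x $ i)\<^sup>2)" for x
    by (simp add: diagm_mult_vec inner_vec_def power2_eq_square mult_ac)
  then have "0 \<le> x \<bullet> (diagm b *v x)" for x
    using assms(1) by (simp add: sum_nonneg)
  moreover have "sym_mat (diagm b)" by (simp add: sym_mat_def diagm_def transpose_def vec_eq_iff)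
  ultimately show ?thesis using assms(2) by (simp add: S1_def psd_def trace_diagm)
qed

lemma S1_det_bounds:
  fixes B :: "real^'n^'n"
  assumes "B \<in> S1"
  shows "0 \<le> det B" "det B \<le> 1"
proof -
  have B: "psd B" "trace B = 1" using assms by (auto simp: S1_def)
  obtain Q c where Q: "orthogonal_matrix Q" and QB: "transpose Q ** B ** Q = diagm c"
    using sym_mat_diagonalization B(1) unfolding psd_def by blast
  have c0: "0 \<le> c i" for i
    using psd_diag_nonneg[OF psd_transpose_mult_mult[OF B(1)], of Q i] by (simp add: QB diagm_def)
  have "sum c UNIV = 1" using trace_orthogonal_conj[OF Q, of B] B(2) by (simp add: QB trace_diagm)
  then have c1: "c i \<le> 1" for i using member_le_sum[of i UNIV c] c0 by auto
  have det: "det B = prod c UNIV" using det_orthogonal_conj[OF Q, of B] by (simp add: QB det_diagm)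
  show "0 \<le> det B" unfolding det using c0 by (simp add: prod_nonneg)
  show "det B \<le> 1" unfolding det using c0 c1 by (simp add: prod_le_1)
qed

lemma S1_frob_diagm_ge_Min:
  fixes B :: "real^'n^'n"
  assumes "B \<in> S1"
  shows "Min (range d) \<le> frob B (diagm d)"
proof -
  have B: "psd B" "(\<Sum>i\<in>UNIV. B $ i $ i) = 1" using assms by (auto simp: S1_def trace_def)
  have "Min (range d) = (\<Sum>i\<in>UNIV. B $ i $ i * Min (range d))"
    using B(2) by (simp add: sum_distrib_right[symmetric])
  also have "\<dots> \<le> (\<Sum>i\<in>UNIV. B $ i $ i * d i)"
    using psd_diag_nonneg[OF B(1)] by (intro sum_mono mult_left_mono) auto
  finally show ?thesis by (simp add: frob_diagm)
qed

section \<open>Suprema of affine functions\<close>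

lemma mult_le_abs_mult_bound:
  fixes g a M :: real
  assumes "\<bar>a\<bar> \<le> M"
  shows "g * a \<le> \<bar>g\<bar> * M"
proof -
  have "g * a \<le> \<bar>g\<bar> * \<bar>a\<bar>" by (metis abs_ge_self abs_mult)
  also have "\<dots> \<le> \<bar>g\<bar> * M" using assms by (simp add: mult_left_mono)
  finally show ?thesis .
qed

lemma bdd_above_affine_image:
  fixes c a :: "'a \<Rightarrow> real"
  assumes "\<And>s. s \<in> S \<Longrightarrow> c s \<le> C" "\<And>s. s \<in> S \<Longrightarrow> \<bar>a s\<bar> \<le> M"
  shows "bdd_above ((\<lambda>s. c s + g * a s) ` S)"
proof (rule bdd_aboveI2)
  fix s assume "s \<in> S"
  then show "c s + g * a s \<le> C + \<bar>g\<bar> * M"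
    using assms mult_le_abs_mult_bound[of "a s" M g] by (simp add: add_mono)
qed

lemma lipschitz_on_Sup_affine:
  fixes c a :: "'a \<Rightarrow> real"
  assumes "S \<noteq> {}" "\<And>s. s \<in> S \<Longrightarrow> c s \<le> C" "\<And>s. s \<in> S \<Longrightarrow> \<bar>a s\<bar> \<le> M"
  shows "M-lipschitz_on UNIV (\<lambda>g. Sup ((\<lambda>s. c s + g * a s) ` S))"
proof -
  define F where "F g = Sup ((\<lambda>s. c s + g * a s) ` S)" for g
  have le: "F y \<le> F x + M * \<bar>y - x\<bar>" for x y
    unfolding F_def
  proof (rule cSup_least)
    fix v assume "v \<in> (\<lambda>s. c s + y * a s) ` S"
    then obtain s where s: "s \<in> S" "v = c s + y * a s" by blast
    have "(y - x) * a s \<le> \<bar>y - x\<bar> * M" using assms(3)[OF s(1)] by (rule mult_le_abs_mult_bound)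
    moreover have "c s + x * a s \<le> Sup ((\<lambda>s. c s + x * a s) ` S)"
      using s(1) bdd_above_affine_image[OF assms(2,3)] by (intro cSup_upper) auto
    ultimately show "v \<le> Sup ((\<lambda>s. c s + x * a s) ` S) + M * \<bar>y - x\<bar>"
      unfolding s(2) by (simp add: algebra_simps)
  qed (use assms(1) in auto)
  obtain s where "s \<in> S" using assms(1) by blast
  then have "0 \<le> M" using assms(3) by (meson abs_ge_zero order.trans)
  moreover have "dist (F x) (F y) \<le> M * dist x y" for x y
    using le[of x y] le[of y x] by (simp add: dist_real_def abs_le_iff abs_minus_commute)
  ultimately show ?thesis unfolding F_def[abs_def] by (intro lipschitz_onI)
qed

lemma convex_on_Sup_affine:
  fixes c a :: "'a \<Rightarrow> real"
  assumes "S \<noteq> {}" "\<And>s. s \<in> S \<Longrightarrow> c s \<le> C" "\<And>s. s \<in> S \<Longrightarrow> \<bar>a s\<bar> \<le> M"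
  shows "convex_on UNIV (\<lambda>g. Sup ((\<lambda>s. c s + g * a s) ` S))"
proof (rule convex_onI)
  fix t x y :: real assume t: "0 < t" "t < 1"
  show "Sup ((\<lambda>s. c s + ((1 - t) *\<^sub>R x + t *\<^sub>R y) * a s) ` S)
      \<le> (1 - t) * Sup ((\<lambda>s. c s + x * a s) ` S) + t * Sup ((\<lambda>s. c s + y * a s) ` S)"
  proof (rule cSup_least)
    fix v assume "v \<in> (\<lambda>s. c s + ((1 - t) *\<^sub>R x + t *\<^sub>R y) * a s) ` S"
    then obtain s where s: "s \<in> S" "v = c s + ((1 - t) * x + t * y) * a s" by auto
    have "c s + g * a s \<le> Sup ((\<lambda>s. c s + g * a s) ` S)" for g
      using s(1) bdd_above_affine_image[OF assms(2,3)] by (intro cSup_upper) auto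
    from mult_left_mono[OF this[of x], of "1 - t"] mult_left_mono[OF this[of y], of t] t
    show "v \<le> (1 - t) * Sup ((\<lambda>s. c s + x * a s) ` S) + t * Sup ((\<lambda>s. c s + y * a s) ` S)"
      unfolding s(2) by (simp add: algebra_simps)
  qed (use assms(1) in auto)
qed simp

lemma convex_on_imp_strict_mono_on_atLeast:
  fixes F :: "real \<Rightarrow> real"
  assumes cvx: "convex_on {a..} F" and gt: "\<And>x. a < x \<Longrightarrow> F a < F x"
  shows "strict_mono_on {a..} F"
proof (rule strict_mono_onI)
  fix x y assume "x \<in> {a..}" "y \<in> {a..}" "x < y"
  then have xy: "a \<le> x" "x < y" by auto
  define t where "t = (x - a) / (y - a)"
  have t: "0 \<le> t" "t < 1" using xy by (auto simp: t_def field_simps)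
  have "t * (y - a) = x - a" using xy by (simp add: t_def)
  then have "x = (1 - t) *\<^sub>R a + t *\<^sub>R y" by (simp add: algebra_simps)
  then have "F x \<le> (1 - t) * F a + t * F y"
    using convex_onD[OF cvx, of t a y] t xy by simp
  also have "\<dots> < F y" using mult_strict_left_mono[OF gt[of y], of "1 - t"] t xy by argo
  finally show "F x < F y" .
qed

lemma continuous_mono_on_image_atLeast:
  fixes F :: "real \<Rightarrow> real"
  assumes cont: "continuous_on {a..} F" and mono: "mono_on {a..} F"
    and unbdd: "\<And>y. \<exists>x\<ge>a. y \<le> F x"
  shows "F ` {a..} = {F a..}"
proof
  show "F ` {a..} \<subseteq> {F a..}" using mono by (auto simp: mono_on_def)
  show "{F a..} \<subseteq> F ` {a..}"
  proof
    fix y assume "y \<in> {F a..}"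
    moreover obtain b where "a \<le> b" "y \<le> F b" using unbdd by blast
    moreover have "continuous_on {a..b} F" using cont by (rule continuous_on_subset) auto
    ultimately obtain x where "a \<le> x" "F x = y" using IVT'[of F a y b] by auto
    then show "y \<in> F ` {a..}" by auto
  qed
qed

lemma exists_small_linear_less_root:
  fixes g K :: real and n :: nat
  assumes g: "0 < g" and K: "0 \<le> K" and n: "0 < n"
  obtains t where "0 < t" "real n * t \<le> 1 / 2" "t * K < g * root n (t ^ (n - 1) / 2)"
proof
  define t where "t = min (1 / (2 * real n)) (g ^ n / (2 * (2 * K ^ n + 1)))"
  have Kn: "0 \<le> K ^ n" and gn: "0 < g ^ n" using K g by simp_all
  show t0: "0 < t" using gn Kn n by (simp add: t_def)
  show "real n * t \<le> 1 / 2" using n by (simp add: t_def min_def field_simps)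
  have "2 * K ^ n * t \<le> 2 * K ^ n * (g ^ n / (2 * (2 * K ^ n + 1)))"
    using Kn by (intro mult_left_mono) (auto simp: t_def)
  also have "\<dots> < g ^ n"
    using Kn gn by (simp add: field_simps add_pos_nonneg)
  finally have Kt: "2 * K ^ n * t < g ^ n" .
  have r: "root n (t ^ (n - 1) / 2) ^ n = t ^ (n - 1) / 2"
    using n t0 by (simp add: real_root_pow_pos2)
  have "(t * K) ^ n = (2 * K ^ n * t) * (t ^ (n - 1) / 2)"
    using n by (cases n) (simp_all add: power_mult_distrib)
  also have "\<dots> < g ^ n * (t ^ (n - 1) / 2)" using Kt t0 by (intro mult_strict_right_mono) auto
  also have "\<dots> = (g * root n (t ^ (n - 1) / 2)) ^ n" by (simp only: power_mult_distrib r)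
  finally show "t * K < g * root n (t ^ (n - 1) / 2)"
    by (rule power_less_imp_less_base) (use g t0 n in \<open>simp add: real_root_ge_zero\<close>)
qed

section \<open>The function H for diagonal matrices\<close>

lemma Hset_le_H:
  fixes A B :: "real^'n^'n"
  assumes "bdd_above (Hset A g)" "B \<in> S1"
  shows "- frob B A + g * root CARD('n) (det B) \<le> H A g"
  unfolding H_def using assms by (intro cSup_upper) (auto simp: Hset_def)

lemma S1_nonempty: "(S1 :: (real^'n^'n) set) \<noteq> {}"
  using diagm_in_S1[of "\<lambda>_::'n. 1 / CARD('n)"] by auto

lemma S1_root_det_bound:
  fixes B :: "real^'n^'n"
  assumes "B \<in> S1"
  shows "\<bar>root CARD('n) (det B)\<bar> \<le> 1"
  using S1_det_bounds[OF assms] real_root_le_mono[of "CARD('n)" "det B" 1]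
  by (simp add: real_root_ge_zero)

lemma frob_diagm_diagm: "frob (diagm b) (diagm d) = (\<Sum>i\<in>UNIV. b i * d i)"
  unfolding frob_diagm by (simp add: diagm_def)

context
  fixes d :: "'n::finite \<Rightarrow> real"
begin

lemma H_diagm_eq_Sup:
  "H (diagm d) = (\<lambda>g. Sup ((\<lambda>B. - frob B (diagm d) + g * root CARD('n) (det B)) ` S1))"
  by (simp add: fun_eq_iff H_def Hset_def)

lemma S1_neg_frob_diagm_le:
  fixes B :: "real^'n^'n"
  assumes "B \<in> S1"
  shows "- frob B (diagm d) \<le> - Min (range d)"
  using S1_frob_diagm_ge_Min[OF assms, of d] by linarith

lemma bdd_above_Hset_diagm: "bdd_above (Hset (diagm d) g)"
  unfolding Hset_def using S1_neg_frob_diagm_le S1_root_det_bound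
  by (rule bdd_above_affine_image)

lemma lipschitz_on_H_diagm: "1-lipschitz_on UNIV (H (diagm d))"
  unfolding H_diagm_eq_Sup using S1_nonempty S1_neg_frob_diagm_le S1_root_det_bound
  by (rule lipschitz_on_Sup_affine)

lemma convex_on_H_diagm: "convex_on UNIV (H (diagm d))"
  unfolding H_diagm_eq_Sup using S1_nonempty S1_neg_frob_diagm_le S1_root_det_bound
  by (rule convex_on_Sup_affine)

lemma exists_Min_index: "\<exists>i0. d i0 = Min (range d)"
proof -
  have "Min (range d) \<in> range d" by (rule Min_in) auto
  then show ?thesis by (metis rangeE)
qed

lemma H_diagm_zero: "H (diagm d) 0 = - Min (range d)"
proof (rule antisym)
  show "H (diagm d) 0 \<le> - Min (range d)"
    unfolding H_def Hset_def using S1_nonempty S1_neg_frob_diagm_le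
    by (intro cSup_least) fastforce+
  obtain i0 where i0: "d i0 = Min (range d)" using exists_Min_index by blast
  define e :: "'n \<Rightarrow> real" where "e i = (if i = i0 then 1 else 0)" for i
  have "diagm e \<in> S1" by (rule diagm_in_S1) (auto simp: e_def)
  moreover have "frob (diagm e) (diagm d) = Min (range d)"
    using i0 by (simp add: frob_diagm_diagm e_def if_distrib[of "\<lambda>x. x * _"] cong: if_cong)
  ultimately show "- Min (range d) \<le> H (diagm d) 0"
    using Hset_le_H[OF bdd_above_Hset_diagm, of "diagm e" 0] by simp
qed

lemma H_diagm_gt_zero:
  assumes g: "0 < g"
  shows "- Min (range d) < H (diagm d) g"
proof -
  define n where "n = CARD('n)"
  have n: "0 < n" by (simp add: n_def)
  define l where "l = Min (range d)"
  obtain i0 where i0: "d i0 = l" using exists_Min_index unfolding l_def by blast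
  define K where "K = sum d UNIV - n * l"
  have "(\<Sum>i\<in>(UNIV :: 'n set). l) \<le> sum d UNIV" unfolding l_def by (intro sum_mono) simp
  then have K: "0 \<le> K" by (simp add: K_def n_def)
  obtain t :: real where t: "0 < t" "n * t \<le> 1 / 2" "t * K < g * root n (t ^ (n - 1) / 2)"
    using exists_small_linear_less_root[OF g K n] by blast
  define b where "b i = t + (if i = i0 then 1 - n * t else 0)" for i
  have "0 \<le> b i" for i using t by (simp add: b_def)
  moreover have "sum b UNIV = 1" by (simp add: b_def sum.distrib n_def)
  ultimately have B: "diagm b \<in> S1" by (rule diagm_in_S1)
  have "frob (diagm b) (diagm d) = t * sum d UNIV + (1 - n * t) * l"
    using i0 by (simp add: frob_diagm_diagm b_def distrib_right sum.distrib sum_distrib_left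
        if_distrib[of "\<lambda>x. x * _"] cong: if_cong)
  then have frob: "frob (diagm b) (diagm d) = l + t * K" by (simp add: K_def algebra_simps)
  have "prod b UNIV = b i0 * prod b (UNIV - {i0})" by (simp add: prod.remove)
  also have "prod b (UNIV - {i0}) = t ^ (n - 1)"
    by (simp add: b_def n_def card_Diff_singleton)
  finally have "det (diagm b) = b i0 * t ^ (n - 1)" by (simp add: det_diagm)
  moreover have "1 / 2 \<le> b i0" using t(1,2) by (simp add: b_def)
  ultimately have "t ^ (n - 1) / 2 \<le> det (diagm b)" using t(1) by (simp add: mult_right_mono)
  then have "g * root n (t ^ (n - 1) / 2) \<le> g * root n (det (diagm b))"
    using g by (simp add: real_root_le_mono n_def)
  then have "- l < - frob (diagm b) (diagm d) + g * root n (det (diagm b))"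
    using t(3) frob by linarith
  also have "\<dots> \<le> H (diagm d) g" using Hset_le_H[OF bdd_above_Hset_diagm B] by (simp add: n_def)
  finally show ?thesis by (simp add: l_def)
qed

lemma H_diagm_ge_mean: "(g - sum d UNIV) / CARD('n) \<le> H (diagm d) g"
proof -
  define n where "n = CARD('n)"
  have n: "0 < n" by (simp add: n_def)
  have B: "diagm (\<lambda>_::'n. 1 / n) \<in> S1" using n by (intro diagm_in_S1) (auto simp: n_def)
  have "root n (det (diagm (\<lambda>_::'n. 1 / n))) = 1 / n"
    using n by (simp add: det_diagm n_def real_root_power_cancel)
  moreover have "frob (diagm (\<lambda>_::'n. 1 / n)) (diagm d) = sum d UNIV / n"
    by (simp add: frob_diagm_diagm sum_divide_distrib)
  ultimately show ?thesis
    using Hset_le_H[OF bdd_above_Hset_diagm B, of g] by (simp add: n_def diff_divide_distrib)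
qed

lemma strict_mono_on_H_diagm: "strict_mono_on {0..} (H (diagm d))"
  using convex_on_subset[OF convex_on_H_diagm] H_diagm_zero H_diagm_gt_zero
  by (intro convex_on_imp_strict_mono_on_atLeast) auto

lemma H_diagm_image: "H (diagm d) ` {0..} = {- Min (range d)..}"
proof -
  have "\<exists>g\<ge>0. y \<le> H (diagm d) g" for y
  proof (intro exI conjI)
    define g where "g = max 0 (CARD('n) * y + sum d UNIV)"
    show "0 \<le> g" by (simp add: g_def)
    have "y \<le> (g - sum d UNIV) / CARD('n)" by (simp add: g_def field_simps)
    also have "\<dots> \<le> H (diagm d) g" by (rule H_diagm_ge_mean)
    finally show "y \<le> H (diagm d) g" .
  qed
  then have "H (diagm d) ` {0..} = {H (diagm d) 0..}"
    using lipschitz_on_continuous_on[OF lipschitz_on_H_diagm]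
      strict_mono_on_imp_mono_on[OF strict_mono_on_H_diagm]
    by (intro continuous_mono_on_image_atLeast) (auto intro: continuous_on_subset)
  then show ?thesis by (simp add: H_diagm_zero)
qed

end

theorem lemma3p4:
  fixes A :: "real^'n^'n" and f :: real
  assumes "CARD('n) \<ge> 2"
    and "psd A"
    and "f \<ge> 0"
  defines "\<Phi> \<equiv> (\<lambda>\<delta>. H A (f + \<delta>))"
  shows "(\<forall>\<delta>\<ge>-f. bdd_above (Hset A (f + \<delta>)))
    \<and> \<Phi> ` {-f..} \<subseteq> {- min_eig A..}
    \<and> continuous_on {-f..} \<Phi>
    \<and> strict_mono_on {-f..} \<Phi>
    \<and> bij_betw \<Phi> {-f..} {- min_eig A..}"
proof -
  obtain Q d where Q: "orthogonal_matrix Q" and D: "transpose Q ** A ** Q = diagm d"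
    using assms(2) sym_mat_diagonalization unfolding psd_def by blast
  have Hset: "Hset A = Hset (diagm d)" using Hset_orthogonal_conj[OF Q, of A] by (simp add: D)
  have min_eig: "min_eig A = Min (range d)"
    using eigenvalues_orthogonal_conj[OF Q, of A] by (simp add: D min_eig_def eigenvalues_diagm)
  have \<Phi>: "\<Phi> = H (diagm d) \<circ> (\<lambda>\<delta>. f + \<delta>)"
    by (simp add: \<Phi>_def fun_eq_iff H_def Hset)
  have shift: "(\<lambda>\<delta>. f + \<delta>) ` {-f..} = {0..}" by (simp add: image_add_atLeast)
  have image: "\<Phi> ` {-f..} = {- min_eig A..}"
    unfolding \<Phi> image_comp[symmetric] shift min_eig by (rule H_diagm_image)
  have mono: "strict_mono_on {-f..} \<Phi>"
  proof (rule strict_mono_onI)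
    fix r s assume "r \<in> {-f..}" "s \<in> {-f..}" "r < s"
    then show "\<Phi> r < \<Phi> s"
      using strict_mono_onD[OF strict_mono_on_H_diagm, of "f + r" "f + s"] by (simp add: \<Phi>)
  qed
  have "continuous_on {-f..} \<Phi>"
    unfolding \<Phi> using lipschitz_on_continuous_on[OF lipschitz_on_H_diagm]
    by (intro continuous_on_compose continuous_intros) (auto intro: continuous_on_subset)
  with image mono show ?thesis
    by (simp add: Hset bdd_above_Hset_diagm bij_betw_def strict_mono_on_imp_inj_on)
qed

end
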